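(* Let $(P_n)_{n\ge 0}$ be the Catalan-Larcombe-French numbers. Then for every prime $p$ and all positive integers $m$ and $r$, $$P_{mp^r}\equiv P_{mp^{r-1}}\pmod{p^r}.$$
   Context: The Catalan-Larcombe-French numbers are defined by $P_0=1$, $P_1=8$ and, for $n\ge 2$, $n^2P_n-8(3n^2-3n+1)P_{n-1}+128(n-1)^2P_{n-2}=0$. Equivalently, $P_n=2^n\sum_{i=0}^{\lfloor n/2\rfloor}(-4)^i\binom{2(n-i)}{n-i}^2\binom{n-i}{i}$ for $n\ge 0$. The first values are $1,8,80,896,10816,137728$. *)

theory Defs
  imports "HOL-Computational_Algebra.Primes" "HOL-Number_Theory.Cong"
begin

definition clf :: "nat \<Rightarrow> int" where
  "clf n = 2 ^ n * (\<Sum>i\<le>n div 2. (-4) ^ i * int ((2 * (n - i)) choose (n - i)) ^ 2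
                                       * int ((n - i) choose i))"

end

theory Submission
  imports Defs "HOL-Computational_Algebra.Polynomial"
begin

text \<open>
  Write Q(n) = P(n) / 2^n. Both Q(n) = sum_i (-4)^i C(2(n-i), n-i)^2 C(n-i, i) and
  R(n) = sum_m C(n, 2m) 4^(n-2m) C(2m, m)^2 satisfy
  n^2 Q(n) - 4(3n^2 - 3n + 1) Q(n-1) + 32(n-1)^2 Q(n-2) = 0, as Zeilberger certificates show, and
  they agree for n = 0, 1; hence Q = R. By the second formula, P(n) is the coefficient of (xy)^n in
  L(x,y)^n, where L(x,y) = 2((x^2+1)(y^2+1) + 4xy). In any commutative ring
  L(x,y)^p = L(x^p, y^p) mod p, and p | A - B implies p(A - B) | A^p - B^p. Iterating,
  L(x,y)^(m p^r) = L(x^p, y^p)^(m p^(r-1)) mod p^r in Z[x,y], and comparing the coefficients of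
  (xy)^(m p^r) gives the congruence.
\<close>

section \<open>Congruences in commutative rings\<close>

lemma of_nat_dvd_of_nat: "m dvd n \<Longrightarrow> (of_nat m :: 'a::comm_semiring_1) dvd of_nat n"
  by (elim dvdE) simp

lemma dvd_power_diff_power:
  fixes x y :: "'a::comm_ring_1"
  shows "x - y dvd x ^ n - y ^ n"
  by (simp add: power_diff_sumr2)

lemma prime_dvd_add_power_diff:
  fixes a b :: "'a::comm_ring_1"
  assumes "prime p"
  shows "of_nat p dvd (a + b) ^ p - (a ^ p + b ^ p)"
proof -
  have "0 < p"
    using assms prime_gt_0_nat by blast
  then have "{..p} = insert 0 (insert p {1..<p})"
    by auto
  then have "(a + b) ^ p - (a ^ p + b ^ p) = (\<Sum>k\<in>{1..<p}. of_nat (p choose k) * a ^ k * b ^ (p - k))"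
    using \<open>0 < p\<close> by (simp add: binomial_ring)
  also have "of_nat p dvd \<dots>"
    using assms by (intro dvd_sum dvd_mult2 of_nat_dvd_of_nat dvd_choose_prime) auto
  finally show ?thesis .
qed

lemma prime_dvd_add_power_diffI:
  fixes a b A B :: "'a::comm_ring_1"
  assumes "prime p" "of_nat p dvd a ^ p - A" "of_nat p dvd b ^ p - B"
  shows "of_nat p dvd (a + b) ^ p - (A + B)"
proof -
  have "(a + b) ^ p - (A + B) = ((a + b) ^ p - (a ^ p + b ^ p)) + (a ^ p - A) + (b ^ p - B)"
    by (simp add: algebra_simps)
  then show ?thesis
    using assms prime_dvd_add_power_diff by (metis dvd_add)
qed

lemma prime_dvd_of_nat_power_diff:
  assumes "prime p"
  shows "(of_nat p :: 'a::comm_ring_1) dvd of_nat c ^ p - of_nat c"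
proof (induction c)
  case 0
  then show ?case
    using assms prime_gt_0_nat by (simp add: power_0_left)
next
  case (Suc c)
  have "of_nat p dvd 1 ^ p - (1 :: 'a)"
    by simp
  then show ?case
    using prime_dvd_add_power_diffI[OF assms Suc] by (simp add: add.commute)
qed

lemma prime_dvd_of_nat_mult_power_diff:
  fixes x :: "'a::comm_ring_1"
  assumes "prime p"
  shows "of_nat p dvd (of_nat c * x) ^ p - of_nat c * x ^ p"
proof -
  have "(of_nat c * x) ^ p - of_nat c * x ^ p = (of_nat c ^ p - of_nat c) * x ^ p"
    by (simp add: power_mult_distrib algebra_simps)
  also have "of_nat p dvd \<dots>"
    using prime_dvd_of_nat_power_diff[OF assms] by (rule dvd_mult2)
  finally show ?thesis .
qed

lemma dvd_power_diff_power_lift: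
  fixes a b :: "'a::comm_ring_1"
  assumes "of_nat p dvd a - b"
  shows "of_nat p * (a - b) dvd a ^ p - b ^ p"
proof -
  define s where "s = (\<Sum>i<p. b ^ (p - Suc i) * a ^ i)"
  have "a ^ p - b ^ p = (a - b) * s"
    unfolding s_def by (rule power_diff_sumr2)
  moreover have "of_nat p dvd s"
  proof -
    have "s = of_nat p * b ^ (p - 1) + (\<Sum>i<p. b ^ (p - Suc i) * (a ^ i - b ^ i))"
    proof -
      have "b ^ (p - Suc i) * b ^ i = b ^ (p - 1)" if "i < p" for i
        using that by (simp flip: power_add)
      then show ?thesis
        by (simp add: s_def algebra_simps sum_subtractf)
    qed
    moreover have "of_nat p dvd (\<Sum>i<p. b ^ (p - Suc i) * (a ^ i - b ^ i))"
      using assms dvd_power_diff_power dvd_trans by (intro dvd_sum dvd_mult) blast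
    ultimately show ?thesis
      by simp
  qed
  ultimately show ?thesis
    by (simp add: mult.commute mult_dvd_mono)
qed

lemma power_dvd_iterated_power_diff:
  fixes a b :: "'a::comm_ring_1"
  assumes "of_nat p dvd a ^ p - b" "0 < r"
  shows "of_nat p ^ r dvd a ^ p ^ r - b ^ p ^ (r - 1)"
  using \<open>0 < r\<close>
proof (induction r rule: nat_induct_non_zero)
  case 1
  then show ?case
    using assms(1) by simp
next
  case (Suc r)
  have "of_nat p dvd a ^ p ^ r - b ^ p ^ (r - 1)"
    using Suc.IH \<open>0 < r\<close> dvd_power dvd_trans by blast
  then have "of_nat p * (a ^ p ^ r - b ^ p ^ (r - 1)) dvd (a ^ p ^ r) ^ p - (b ^ p ^ (r - 1)) ^ p"
    by (rule dvd_power_diff_power_lift)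
  moreover have "(a ^ p ^ r) ^ p = a ^ p ^ Suc r" "(b ^ p ^ (r - 1)) ^ p = b ^ p ^ (Suc r - 1)"
    using \<open>0 < r\<close> by (simp_all flip: power_mult power_Suc2 add: not0_implies_Suc)
  moreover have "of_nat p ^ Suc r dvd of_nat p * (a ^ p ^ r - b ^ p ^ (r - 1))"
    using Suc.IH by (simp add: mult_dvd_mono)
  ultimately show ?case
    using dvd_trans by metis
qed

section \<open>A bivariate generating polynomial\<close>

definition clf_kernel :: "'a::comm_ring_1 \<Rightarrow> 'a \<Rightarrow> 'a" where
  "clf_kernel x y = 2 * ((x\<^sup>2 + 1) * (y\<^sup>2 + 1) + 4 * x * y)"

lemma prime_dvd_clf_kernel_power_diff:
  fixes x y :: "'a::comm_ring_1"
  assumes "prime p"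
  shows "of_nat p dvd clf_kernel x y ^ p - clf_kernel (x ^ p) (y ^ p)"
proof -
  have expand: "clf_kernel u v = of_nat 2 * (u * v)\<^sup>2 + (of_nat 2 * u\<^sup>2 + (of_nat 2 * v\<^sup>2 + (of_nat 2 * 1 + of_nat 8 * (u * v))))"
    for u v :: 'a
    by (simp add: clf_kernel_def algebra_simps power2_eq_square)
  have "clf_kernel (x ^ p) (y ^ p) = of_nat 2 * ((x * y)\<^sup>2) ^ p + (of_nat 2 * (x\<^sup>2) ^ p
      + (of_nat 2 * (y\<^sup>2) ^ p + (of_nat 2 * 1 ^ p + of_nat 8 * (x * y) ^ p)))"
    unfolding expand by (simp add: power_mult_distrib flip: power_mult power_mult_distrib) (simp add: mult.commute power_mult)
  then show ?thesis
    unfolding expand[of x y]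
    by (simp only:) (intro prime_dvd_add_power_diffI prime_dvd_of_nat_mult_power_diff assms)
qed

text \<open>Bivariate integer polynomials are modelled as \<open>int poly poly\<close>; \<open>bimonom i j\<close> is
  \<open>x\<^sup>i y\<^sup>j\<close> with \<open>x\<close> the outer variable.\<close>

definition bimonom :: "nat \<Rightarrow> nat \<Rightarrow> int poly poly" where
  "bimonom i j = monom (monom 1 j) i"

definition bicoeff :: "int poly poly \<Rightarrow> nat \<Rightarrow> nat \<Rightarrow> int" where
  "bicoeff P i j = coeff (coeff P i) j"

lemma bimonom_mult: "bimonom i j * bimonom k l = bimonom (i + k) (j + l)"
  by (simp add: bimonom_def mult_monom)

lemma bimonom_power: "bimonom i j ^ n = bimonom (i * n) (j * n)"
  by (simp add: bimonom_def monom_power)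

lemma bicoeff_bimonom: "bicoeff (bimonom i j) x y = of_bool (i = x) * of_bool (j = y)"
  by (auto simp: bicoeff_def bimonom_def coeff_monom)

lemma bicoeff_sum: "bicoeff (\<Sum>k\<in>A. f k) x y = (\<Sum>k\<in>A. bicoeff (f k) x y)"
  by (simp add: bicoeff_def coeff_sum)

lemma bicoeff_diff: "bicoeff (P - Q) x y = bicoeff P x y - bicoeff Q x y"
  by (simp add: bicoeff_def)

lemma bicoeff_of_int_mult: "bicoeff (of_int c * P) x y = c * bicoeff P x y"
  by (simp add: bicoeff_def of_int_poly)

lemma dvd_bicoeff: "of_int q dvd P \<Longrightarrow> q dvd bicoeff P x y"
  by (auto simp: bicoeff_of_int_mult elim!: dvdE)

definition ct_term :: "nat \<Rightarrow> nat \<Rightarrow> int" where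
  "ct_term n m = int (n choose (2 * m)) * 4 ^ (n - 2 * m) * int (2 * m choose m) ^ 2"

definition ct_sum :: "nat \<Rightarrow> int" where
  "ct_sum n = (\<Sum>m\<le>n div 2. ct_term n m)"

lemma sum_atMost_even:
  fixes f :: "nat \<Rightarrow> 'a::comm_monoid_add"
  shows "(\<Sum>j\<le>n. if even j then f j else 0) = (\<Sum>m\<le>n div 2. f (2 * m))"
proof -
  have "{j\<in>{..n}. even j} = (\<lambda>m. 2 * m) ` {..n div 2}"
    by (auto elim!: evenE)
  then have "(\<Sum>j\<in>{j\<in>{..n}. even j}. f j) = (\<Sum>m\<le>n div 2. f (2 * m))"
    by (simp add: sum.reindex inj_on_def)
  then show ?thesis
    by (metis finite_atMost sum.inter_filter)
qed

lemma sum_choose_half: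
  "(\<Sum>k\<le>j. int (j choose k) * of_bool (2 * k = j)) = (if even j then int (j choose (j div 2)) else 0)"
proof -
  have "(\<Sum>k\<le>j. int (j choose k) * of_bool (2 * k = j)) = (\<Sum>k\<le>j. if k = j div 2 \<and> even j then int (j choose k) else 0)"
    by (intro sum.cong) auto
  then show ?thesis
    by (simp add: sum.delta)
qed

lemma clf_kernel_bimonom_power:
  "clf_kernel (bimonom a 0) (bimonom 0 a) ^ N =
     (\<Sum>j\<le>N. \<Sum>k\<le>j. \<Sum>l\<le>j. of_int (2 ^ N * int (N choose j) * 4 ^ (N - j) * int (j choose k) * int (j choose l))
        * bimonom (a * (2 * k + (N - j))) (a * (2 * l + (N - j))))"
proof -
  have x: "(bimonom a 0 ^ 2 + 1) ^ j = (\<Sum>k\<le>j. of_nat (j choose k) * bimonom (a * (2 * k)) 0)" for j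
    using binomial_ring[of "bimonom a 0 ^ 2" 1 j] by (simp add: bimonom_power ac_simps)
  have y: "(bimonom 0 a ^ 2 + 1) ^ j = (\<Sum>l\<le>j. of_nat (j choose l) * bimonom 0 (a * (2 * l)))" for j
    using binomial_ring[of "bimonom 0 a ^ 2" 1 j] by (simp add: bimonom_power ac_simps)
  have "clf_kernel (bimonom a 0) (bimonom 0 a) ^ N = 2 ^ N * (\<Sum>j\<le>N. of_nat (N choose j)
      * ((bimonom a 0 ^ 2 + 1) ^ j * (bimonom 0 a ^ 2 + 1) ^ j) * (4 ^ (N - j) * bimonom (a * (N - j)) (a * (N - j))))"
    unfolding clf_kernel_def power_mult_distrib binomial_ring
    by (simp add: bimonom_mult bimonom_power power_mult_distrib mult.assoc)
  also have "\<dots> = (\<Sum>j\<le>N. \<Sum>k\<le>j. \<Sum>l\<le>j. of_int (2 ^ N * int (N choose j) * 4 ^ (N - j) * int (j choose k) * int (j choose l))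
        * bimonom (a * (2 * k + (N - j))) (a * (2 * l + (N - j))))"
    unfolding x y
    by (simp add: sum_distrib_left sum_distrib_right bimonom_mult algebra_simps)
  finally show ?thesis .
qed

lemma bicoeff_clf_kernel_power:
  assumes "0 < a"
  shows "bicoeff (clf_kernel (bimonom a 0) (bimonom 0 a) ^ N) (a * N) (a * N) = 2 ^ N * ct_sum N"
proof -
  define S where "S j = (\<Sum>k\<le>j. int (j choose k) * of_bool (a * (2 * k + (N - j)) = a * N))" for j
  have S: "S j = (if even j then int (j choose (j div 2)) else 0)" if "j \<le> N" for j
  proof -
    have "a * (2 * k + (N - j)) = a * N \<longleftrightarrow> 2 * k = j" for k
      using assms that by auto
    then show ?thesis
      by (simp add: S_def sum_choose_half)
  qed
  have "bicoeff (clf_kernel (bimonom a 0) (bimonom 0 a) ^ N) (a * N) (a * N)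
      = (\<Sum>j\<le>N. 2 ^ N * int (N choose j) * 4 ^ (N - j) * (S j * S j))"
    unfolding clf_kernel_bimonom_power bicoeff_sum bicoeff_of_int_mult bicoeff_bimonom S_def
    by (simp add: sum_product sum_distrib_left mult_ac)
  also have "\<dots> = (\<Sum>j\<le>N. if even j then 2 ^ N * int (N choose j) * 4 ^ (N - j) * int (j choose (j div 2)) ^ 2 else 0)"
    by (intro sum.cong refl) (simp add: S power2_eq_square)
  also have "\<dots> = 2 ^ N * ct_sum N"
    by (simp add: sum_atMost_even ct_sum_def ct_term_def sum_distrib_left ac_simps)
  finally show ?thesis .
qed

lemma ct_sum_congruence:
  assumes "prime p" "0 < r"
  shows "[2 ^ (m * p ^ r) * ct_sum (m * p ^ r) = 2 ^ (m * p ^ (r - 1)) * ct_sum (m * p ^ (r - 1))] (mod int p ^ r)"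
proof -
  define K where "K a = clf_kernel (bimonom a 0) (bimonom 0 a)" for a
  have "of_nat p dvd K 1 ^ p - K p"
    using prime_dvd_clf_kernel_power_diff[OF assms(1), of "bimonom 1 0" "bimonom 0 1"]
    by (simp add: K_def bimonom_power)
  then have "of_nat p ^ r dvd K 1 ^ p ^ r - K p ^ p ^ (r - 1)"
    using assms(2) by (rule power_dvd_iterated_power_diff)
  then have "of_nat p ^ r dvd (K 1 ^ p ^ r) ^ m - (K p ^ p ^ (r - 1)) ^ m"
    using dvd_power_diff_power by (rule dvd_trans)
  then have "of_int (int p ^ r) dvd K 1 ^ (m * p ^ r) - K p ^ (m * p ^ (r - 1))"
    by (simp add: mult.commute flip: power_mult)
  then have "int p ^ r dvd bicoeff (K 1 ^ (m * p ^ r) - K p ^ (m * p ^ (r - 1))) (m * p ^ r) (m * p ^ r)"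
    by (rule dvd_bicoeff)
  moreover have "bicoeff (K p ^ (m * p ^ (r - 1))) (m * p ^ r) (m * p ^ r) = 2 ^ (m * p ^ (r - 1)) * ct_sum (m * p ^ (r - 1))"
  proof -
    have "p * (m * p ^ (r - 1)) = m * p ^ r"
      using assms(2) by (cases r) auto
    then show ?thesis
      using bicoeff_clf_kernel_power[of p "m * p ^ (r - 1)"] assms(1) prime_gt_0_nat by (simp only: K_def)
  qed
  moreover have "bicoeff (K 1 ^ (m * p ^ r)) (m * p ^ r) (m * p ^ r) = 2 ^ (m * p ^ r) * ct_sum (m * p ^ r)"
    using bicoeff_clf_kernel_power[of 1 "m * p ^ r"] by (simp add: K_def)
  ultimately show ?thesis
    by (simp add: bicoeff_diff cong_iff_dvd_diff)
qed

section \<open>The recurrence\<close>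

declare binomial_Suc_Suc [simp del]

text \<open>The recurrence of the Catalan-Larcombe-French numbers, rewritten for \<open>P\<^sub>n / 2\<^sup>n\<close>.\<close>

definition clf_rec :: "(nat \<Rightarrow> 'a::comm_ring_1) \<Rightarrow> nat \<Rightarrow> 'a" where
  "clf_rec f n = of_nat (n + 2) ^ 2 * f (n + 2) - 4 * (3 * of_nat (n + 2) ^ 2 - 3 * of_nat (n + 2) + 1) * f (n + 1)
     + 32 * of_nat (n + 1) ^ 2 * f n"

lemma clf_rec_of_int: "clf_rec (\<lambda>n. of_int (f n)) n = of_int (clf_rec f n)"
  by (simp add: clf_rec_def)

lemma clf_rec_sum: "clf_rec (\<lambda>n. \<Sum>i\<in>I. f n i) N = (\<Sum>i\<in>I. clf_rec (\<lambda>n. f n i) N)"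
  by (simp add: clf_rec_def sum_subtractf sum.distrib sum_distrib_left)

lemma clf_rec_telescope:
  fixes f :: "nat \<Rightarrow> nat \<Rightarrow> 'a::comm_ring_1"
  assumes vanish: "\<And>n i. n div 2 < i \<Longrightarrow> f n i = 0"
    and cert: "\<And>i. clf_rec (\<lambda>n. f n i) N = G (i + 1) - G i"
    and "G 0 = 0" "G (N + 3) = 0"
  shows "clf_rec (\<lambda>n. \<Sum>i\<le>n div 2. f n i) N = 0"
proof -
  have extend: "(\<Sum>i\<le>n div 2. f n i) = (\<Sum>i<N + 3. f n i)" if "n \<le> N + 2" for n
    using that by (intro sum.mono_neutral_left) (auto intro: vanish)
  have "clf_rec (\<lambda>n. \<Sum>i\<le>n div 2. f n i) N = clf_rec (\<lambda>n. \<Sum>i<N + 3. f n i) N"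
    unfolding clf_rec_def by (simp only: extend le_add1 add_le_mono le_refl one_le_numeral)
  also have "\<dots> = (\<Sum>i<N + 3. clf_rec (\<lambda>n. f n i) N)"
    by (rule clf_rec_sum)
  also have "\<dots> = G (N + 3) - G 0"
    unfolding cert by (simp add: sum_lessThan_telescope)
  finally show ?thesis
    using assms(3,4) by simp
qed

lemma clf_rec_unique:
  fixes f g :: "nat \<Rightarrow> int"
  assumes "\<And>n. clf_rec f n = 0" "\<And>n. clf_rec g n = 0" "f 0 = g 0" "f 1 = g 1"
  shows "f n = g n"
proof -
  have "f n = g n \<and> f (n + 1) = g (n + 1)"
  proof (induction n)
    case 0
    then show ?case
      using assms(3,4) by simp
  next
    case (Suc n)
    have "clf_rec f n - clf_rec g n = int (n + 2) ^ 2 * (f (n + 2) - g (n + 2))"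
      using Suc.IH by (simp add: clf_rec_def algebra_simps)
    then show ?case
      using Suc.IH assms(1,2) by simp
  qed
  then show ?thesis ..
qed

lemma real_binomial_Suc_left:
  assumes "k \<le> n"
  shows "real (n + 1 choose k) = (real n + 1) / (real n + 1 - real k) * real (n choose k)"
proof -
  have "(n + 1 - k) * (n + 1 choose k) = (n + 1) * (n choose k)"
    using binomial_absorb_comp[of "n + 1" k] by simp
  then have "real (n + 1 - k) * real (n + 1 choose k) = real (n + 1) * real (n choose k)"
    by (metis of_nat_mult)
  then have "(real n + 1 - real k) * real (n + 1 choose k) = (real n + 1) * real (n choose k)"
    using assms by (simp add: of_nat_diff add.commute)
  moreover have "real n + 1 - real k \<noteq> 0"
    using assms by linarith
  ultimately show ?thesis
    by (simp add: field_simps)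
qed

lemma real_binomial_Suc_Suc:
  "real (n + 1 choose (k + 1)) = (real n + 1) / (real k + 1) * real (n choose k)"
proof -
  have "(real k + 1) * real (n + 1 choose (k + 1)) = (real n + 1) * real (n choose k)"
    using Suc_times_binomial[of k n] by (metis of_nat_Suc of_nat_mult Suc_eq_plus1 add.commute)
  then show ?thesis
    by (simp add: field_simps)
qed

lemma real_binomial_eq_Suc_right:
  assumes "k < n"
  shows "real (n choose k) = (real k + 1) / (real n - real k) * real (n choose (k + 1))"
proof -
  have "(n - k) * (n choose k) = (k + 1) * (n choose (k + 1))"
    using binomial_absorb_comp[of n k] binomial_absorption[of k n] by simp
  then have "(real n - real k) * real (n choose k) = (real k + 1) * real (n choose (k + 1))"
    using assms by (metis of_nat_Suc of_nat_diff of_nat_mult add.commute less_imp_le Suc_eq_plus1)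
  moreover have "real n - real k \<noteq> 0"
    using assms by simp
  ultimately show ?thesis
    by (simp add: field_simps)
qed

lemma central_binomial_Suc: "2 * (k + 1) choose (k + 1) = 2 * (2 * k + 1 choose k)"
proof -
  have "(k + 1) * (2 * (k + 1) choose (k + 1)) = (k + 1) * (2 * (2 * k + 1 choose k))"
    using Suc_times_binomial[of k "2 * k + 1"] by simp
  then show ?thesis
    by (simp only: mult_cancel1) simp
qed

lemma real_central_binomial_Suc:
  "real (2 * (k + 1) choose (k + 1)) = 2 * (2 * real k + 1) / (real k + 1) * real (2 * k choose k)"
  unfolding central_binomial_Suc using real_binomial_Suc_left[of k "2 * k"] by simp

definition clf_term :: "nat \<Rightarrow> nat \<Rightarrow> int" where
  "clf_term n i = (-4) ^ i * int (2 * (n - i) choose (n - i)) ^ 2 * int (n - i choose i)"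

definition clf_sum :: "nat \<Rightarrow> int" where
  "clf_sum n = (\<Sum>i\<le>n div 2. clf_term n i)"

lemma clf_eq: "clf n = 2 ^ n * clf_sum n"
  by (simp add: clf_def clf_sum_def clf_term_def)

lemma clf_term_eq_0: "n < 2 * i \<Longrightarrow> clf_term n i = 0"
  by (simp add: clf_term_def binomial_eq_0)

text \<open>Zeilberger's certificate for \<open>clf_term\<close>: applying \<open>clf_rec\<close> to the summand gives a
  difference of consecutive values of \<open>clf_cert\<close>. The same holds for \<open>ct_term\<close> and \<open>ct_cert\<close>.\<close>

definition clf_cert_poly :: "real \<Rightarrow> real \<Rightarrow> real" where
  "clf_cert_poly n i = 2 * i - 3 * n - 8 * n * i - 4 * n * i ^ 2 + 8 * n ^ 2 + 10 * n ^ 2 * i - 6 * n ^ 3"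

definition clf_cert :: "nat \<Rightarrow> nat \<Rightarrow> real" where
  "clf_cert n i = of_int (clf_term n i) * real i * clf_cert_poly (real n) (real i) / (2 * real (n - i) - 1) ^ 2"

lemma clf_cert_eq_0: "n < 2 * i \<Longrightarrow> clf_cert n i = 0"
  by (simp add: clf_cert_def clf_term_eq_0)

lemma mult_square_divide_square:
  fixes d :: "'a::field"
  assumes "d \<noteq> 0"
  shows "a * (d * y) ^ 2 * b * c * e / d ^ 2 = a * y ^ 2 * b * c * e"
  using assms by (simp add: field_simps power_mult_distrib)

text \<open>After dividing out the denominators that arise when neighbouring binomial coefficients are
  compared, all terms of the recurrence become polynomial multiples of \<open>\<alpha>\<^sup>2 w\<close>, and the
  certificate identity is a polynomial identity.\<close>

lemma clf_term_normal_form: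
  assumes "i \<le> J"
  obtains \<alpha> w :: real where
    "real_of_int (clf_term (J + i) i)
       = (-4) ^ i * ((real J + 1) * (real J + 2) * \<alpha>) ^ 2 * ((real J + 1 - real i) * (real J + 2 - real i) * (real i + 1) * w)"
    "real_of_int (clf_term (J + i + 1) i)
       = (-4) ^ i * ((2 * real J + 1) * (2 * (real J + 2) * \<alpha>)) ^ 2 * ((real J + 1) * (real J + 2 - real i) * (real i + 1) * w)"
    "real_of_int (clf_term (J + i + 2) i)
       = (-4) ^ i * ((2 * real J + 3) * (4 * (2 * real J + 1) * \<alpha>)) ^ 2 * ((real J + 2) * (real J + 1) * (real i + 1) * w)"
    "real_of_int (clf_term (J + i + 2) (i + 1))
       = -4 * (-4) ^ i * ((2 * real J + 1) * (2 * (real J + 2) * \<alpha>)) ^ 2 * ((real J + 1) * (real J + 1 - real i) * (real J + 2 - real i) * w)"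
proof -
  have nz: "real J + 1 - real i \<noteq> 0" "real J + 2 - real i \<noteq> 0" "real J + 1 \<noteq> 0" "real J + 2 \<noteq> 0" "real i + 1 \<noteq> 0"
    using assms by linarith+
  obtain \<alpha> where c0: "real (2 * J choose J) = (real J + 1) * (real J + 2) * \<alpha>"
    using nz by (intro that[of "real (2 * J choose J) / ((real J + 1) * (real J + 2))"]) simp
  obtain w where b0: "real (J choose i) = (real J + 1 - real i) * (real J + 2 - real i) * (real i + 1) * w"
    using nz by (intro that[of "real (J choose i) / ((real J + 1 - real i) * (real J + 2 - real i) * (real i + 1))"]) simp
  have c1: "real (2 * (J + 1) choose (J + 1)) = (2 * real J + 1) * (2 * (real J + 2) * \<alpha>)"
    using nz by (simp only: real_central_binomial_Suc c0) (simp add: field_simps)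
  have c2: "real (2 * (J + 1 + 1) choose (J + 1 + 1)) = (2 * real J + 3) * (4 * (2 * real J + 1) * \<alpha>)"
    using nz by (simp only: real_central_binomial_Suc[of "J + 1"] c1) (simp add: field_simps)
  have b1: "real (J + 1 choose i) = (real J + 1) * (real J + 2 - real i) * (real i + 1) * w"
    using nz by (simp only: real_binomial_Suc_left[OF assms] b0) (simp add: field_simps)
  have b2: "real (J + 1 + 1 choose i) = (real J + 2) * (real J + 1) * (real i + 1) * w"
    using assms nz by (simp only: real_binomial_Suc_left[of i "J + 1"] b1 le_SucI) (simp add: field_simps)
  have b3: "real (J + 1 choose (i + 1)) = (real J + 1) * (real J + 1 - real i) * (real J + 2 - real i) * w"
    using nz by (simp only: real_binomial_Suc_Suc b0) (simp add: field_simps)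
  have d: "J + i + 2 - i = J + 1 + 1" "J + i + 1 - i = J + 1" "J + i - i = J" "J + i + 2 - (i + 1) = J + 1"
    by simp_all
  show thesis
    by (rule that[of \<alpha> w]; unfold clf_term_def d; simp only: of_int_mult of_int_power of_int_of_nat_eq c0 c1 c2 b0 b1 b2 b3; simp)
qed

lemma clf_rec_clf_term_interior:
  assumes "i \<le> J"
  shows "clf_rec (\<lambda>n. real_of_int (clf_term n i)) (J + i) = clf_cert (J + i + 2) (i + 1) - clf_cert (J + i + 2) i"
proof -
  obtain \<alpha> w where t0: "real_of_int (clf_term (J + i) i)
       = (-4) ^ i * ((real J + 1) * (real J + 2) * \<alpha>) ^ 2 * ((real J + 1 - real i) * (real J + 2 - real i) * (real i + 1) * w)"
    and t1: "real_of_int (clf_term (J + i + 1) i)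
       = (-4) ^ i * ((2 * real J + 1) * (2 * (real J + 2) * \<alpha>)) ^ 2 * ((real J + 1) * (real J + 2 - real i) * (real i + 1) * w)"
    and t2: "real_of_int (clf_term (J + i + 2) i)
       = (-4) ^ i * ((2 * real J + 3) * (4 * (2 * real J + 1) * \<alpha>)) ^ 2 * ((real J + 2) * (real J + 1) * (real i + 1) * w)"
    and t3: "real_of_int (clf_term (J + i + 2) (i + 1))
       = -4 * (-4) ^ i * ((2 * real J + 1) * (2 * (real J + 2) * \<alpha>)) ^ 2 * ((real J + 1) * (real J + 1 - real i) * (real J + 2 - real i) * w)"
    using clf_term_normal_form[OF assms] by blast
  have "2 * real J + 1 \<noteq> 0" "2 * real J + 3 \<noteq> 0" "2 * real (J + i + 2 - (i + 1)) - 1 = 2 * real J + 1"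
    "2 * real (J + i + 2 - i) - 1 = 2 * real J + 3"
    by linarith+
  then have g1: "clf_cert (J + i + 2) (i + 1) = -4 * (-4) ^ i * (2 * (real J + 2) * \<alpha>) ^ 2
      * ((real J + 1) * (real J + 1 - real i) * (real J + 2 - real i) * w) * real (i + 1) * clf_cert_poly (real (J + i + 2)) (real (i + 1))"
    and g0: "clf_cert (J + i + 2) i = (-4) ^ i * (4 * (2 * real J + 1) * \<alpha>) ^ 2
      * ((real J + 2) * (real J + 1) * (real i + 1) * w) * real i * clf_cert_poly (real (J + i + 2)) (real i)"
    unfolding clf_cert_def t2 t3 by (simp_all only: mult_square_divide_square not_False_eq_True)
  show ?thesis
    unfolding clf_rec_def g0 g1 t0 t1 t2 clf_cert_poly_def
    by (simp add: algebra_simps power2_eq_square power3_eq_cube)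
qed

lemma clf_rec_clf_term_odd_boundary:
  "clf_rec (\<lambda>n. real_of_int (clf_term n (k + 1))) (2 * k + 1) = clf_cert (2 * k + 3) (k + 2) - clf_cert (2 * k + 3) (k + 1)"
proof -
  obtain \<gamma> where c: "real (2 * (k + 1) choose (k + 1)) = (real k + 2) * \<gamma>"
    by (intro that[of "real (2 * (k + 1) choose (k + 1)) / (real k + 2)"]) simp
  have c': "real (2 * (k + 1 + 1) choose (k + 1 + 1)) = (2 * real k + 3) * (2 * \<gamma>)"
    by (simp only: real_central_binomial_Suc[of "k + 1"] c) (simp add: field_simps)
  define s where "s = (-4 :: real) ^ (k + 1)"
  have d: "2 * k + 3 - (k + 1) = k + 1 + 1" "2 * k + 2 - (k + 1) = k + 1"
    by simp_all
  have t2: "real_of_int (clf_term (2 * k + 2) (k + 1)) = s * ((real k + 2) * \<gamma>) ^ 2"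
    unfolding clf_term_def d s_def by (simp only: of_int_mult of_int_power of_int_of_nat_eq c) simp
  have t3: "real_of_int (clf_term (2 * k + 3) (k + 1)) = s * ((2 * real k + 3) * (2 * \<gamma>)) ^ 2 * real (k + 2)"
    unfolding clf_term_def d s_def by (simp only: of_int_mult of_int_power of_int_of_nat_eq c') (simp add: binomial_Suc_n)
  have "2 * real (k + 1 + 1) - 1 = 2 * real k + 3"
    by simp
  then have g: "clf_cert (2 * k + 3) (k + 1) = s * (2 * \<gamma>) ^ 2 * real (k + 2) * real (k + 1) * clf_cert_poly (real (2 * k + 3)) (real (k + 1))"
    unfolding clf_cert_def t3 d by (simp only: mult_square_divide_square)
  have e: "2 * k + 1 + 2 = 2 * k + 3" "2 * k + 1 + 1 = 2 * k + 2"
    by simp_all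
  have z: "clf_term (2 * k + 1) (k + 1) = 0" "clf_cert (2 * k + 3) (k + 2) = 0"
    by (simp_all add: clf_term_eq_0 clf_cert_eq_0)
  show ?thesis
    unfolding clf_rec_def e t2 t3 g z
    by (simp add: clf_cert_poly_def algebra_simps power2_eq_square power3_eq_cube)
qed

lemma clf_rec_clf_term_even_boundary:
  "clf_rec (\<lambda>n. real_of_int (clf_term n (k + 1))) (2 * k) = clf_cert (2 * k + 2) (k + 2) - clf_cert (2 * k + 2) (k + 1)"
proof -
  define c where "c = real (2 * (k + 1) choose (k + 1))"
  have t: "real_of_int (clf_term (2 * k + 2) (k + 1)) = (-4) ^ (k + 1) * c ^ 2"
    unfolding clf_term_def c_def by simp
  have poly: "clf_cert_poly (real (2 * k + 2)) (real (k + 1)) = - 4 * real (k + 1) * (2 * real k + 1) ^ 2"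
    by (simp add: clf_cert_poly_def algebra_simps power2_eq_square power3_eq_cube)
  have "(2 * real k + 1) ^ 2 \<noteq> 0" "2 * real (2 * k + 2 - (k + 1)) - 1 = 2 * real k + 1"
    by (simp_all add: add_nonneg_pos)
  then have g: "clf_cert (2 * k + 2) (k + 1) = (-4) ^ (k + 1) * c ^ 2 * real (k + 1) * (- 4 * real (k + 1))"
    unfolding clf_cert_def t poly by (simp only: mult.assoc[symmetric] nonzero_mult_div_cancel_right not_False_eq_True)
  have z: "clf_term (2 * k) (k + 1) = 0" "clf_term (2 * k + 1) (k + 1) = 0" "clf_cert (2 * k + 2) (k + 2) = 0"
    by (simp_all add: clf_term_eq_0 clf_cert_eq_0)
  show ?thesis
    unfolding clf_rec_def t g z by (simp add: algebra_simps power2_eq_square)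
qed

lemma clf_rec_clf_term:
  "clf_rec (\<lambda>n. real_of_int (clf_term n i)) N = clf_cert (N + 2) (i + 1) - clf_cert (N + 2) i"
proof -
  consider "2 * i \<le> N" | "2 * i = N + 1" | "2 * i = N + 2" | "N + 2 < 2 * i"
    by linarith
  then show ?thesis
  proof cases
    case 1
    then show ?thesis
      using clf_rec_clf_term_interior[of i "N - i"] by simp
  next
    case 2
    then obtain k where "i = k + 1" "N = 2 * k + 1"
      by (cases i) auto
    then show ?thesis
      using clf_rec_clf_term_odd_boundary[of k] by (simp add: numeral_3_eq_3)
  next
    case 3
    then obtain k where "i = k + 1" "N = 2 * k"
      by (cases i) auto
    then show ?thesis
      using clf_rec_clf_term_even_boundary[of k] by (simp add: numeral_2_eq_2)
  next
    case 4
    then show ?thesis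
      by (simp add: clf_rec_def clf_term_eq_0 clf_cert_eq_0)
  qed
qed

lemma clf_rec_clf_sum: "clf_rec clf_sum N = 0"
proof -
  have "clf_rec (\<lambda>n. \<Sum>i\<le>n div 2. real_of_int (clf_term n i)) N = 0"
    by (rule clf_rec_telescope[where G = "clf_cert (N + 2)"])
      (auto simp: clf_term_eq_0 clf_rec_clf_term clf_cert_def)
  then have "clf_rec (\<lambda>n. real_of_int (clf_sum n)) N = 0"
    by (simp add: clf_sum_def)
  then show ?thesis
    by (simp add: clf_rec_of_int)
qed

definition ct_cert :: "nat \<Rightarrow> nat \<Rightarrow> int" where
  "ct_cert N m = - 4 * int m ^ 2 * int (N + 1 choose (2 * m - 1)) * 4 ^ (N + 2 - 2 * m) * int (2 * m choose m) ^ 2"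

lemma ct_term_eq_0: "n < 2 * m \<Longrightarrow> ct_term n m = 0"
  by (simp add: ct_term_def binomial_eq_0)

lemma ct_term_normal_form:
  assumes N: "N = 2 * (k + 1) + d"
  obtains w t :: real where
    "real_of_int (ct_term N (k + 1)) = (real d + 1) * (real d + 2) * (2 * real k + 3) * w * 4 ^ d * ((real k + 2) * t) ^ 2"
    "real_of_int (ct_term (N + 1) (k + 1)) = (real N + 1) * (real d + 2) * (2 * real k + 3) * w * 4 ^ (d + 1) * ((real k + 2) * t) ^ 2"
    "real_of_int (ct_term (N + 2) (k + 1)) = (real N + 2) * (real N + 1) * (2 * real k + 3) * w * 4 ^ (d + 2) * ((real k + 2) * t) ^ 2"
    "real_of_int (ct_cert N (k + 2))
       = - 4 * real (k + 2) ^ 2 * ((real N + 1) * (real d + 1) * (real d + 2) * w) * 4 ^ d * (2 * (2 * real k + 3) * t) ^ 2"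
    "real_of_int (ct_cert N (k + 1))
       = - 4 * real (k + 1) ^ 2 * (2 * (real k + 1) * (real N + 1) * (2 * real k + 3) * w) * 4 ^ (d + 2) * ((real k + 2) * t) ^ 2"
proof -
  have le: "2 * (k + 1) \<le> N" "2 * (k + 1) \<le> N + 1" "2 * k + 1 < N + 1"
    using N by simp_all
  have nz: "real d + 1 \<noteq> 0" "real d + 2 \<noteq> 0" "2 * real k + 3 \<noteq> 0" "real k + 2 \<noteq> 0"
    by linarith+
  have real_N: "real N = real d + 2 * real k + 2"
    using N by simp
  obtain w where y: "real (N choose (2 * (k + 1))) = (real d + 1) * (real d + 2) * (2 * real k + 3) * w"
    using nz by (intro that[of "real (N choose (2 * (k + 1))) / ((real d + 1) * (real d + 2) * (2 * real k + 3))"]) simp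
  obtain t where c: "real (2 * (k + 1) choose (k + 1)) = (real k + 2) * t"
    using nz by (intro that[of "real (2 * (k + 1) choose (k + 1)) / (real k + 2)"]) simp
  have x1: "real (N + 1 choose (2 * (k + 1))) = (real N + 1) * (real d + 2) * (2 * real k + 3) * w"
    using nz real_N by (simp only: real_binomial_Suc_left[OF le(1)] y) (simp add: field_simps)
  have "N + 2 = N + 1 + 1"
    by simp
  then have x2: "real (N + 2 choose (2 * (k + 1))) = (real N + 2) * (real N + 1) * (2 * real k + 3) * w"
    using nz real_N by (simp only: real_binomial_Suc_left[OF le(2)] x1) (simp add: field_simps)
  have x3: "real (N + 1 choose (2 * (k + 1) + 1)) = (real N + 1) * (real d + 1) * (real d + 2) * w"
    using nz by (simp only: real_binomial_Suc_Suc y) (simp add: field_simps)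
  have "2 * k + 1 + 1 = 2 * (k + 1)"
    by simp
  then have x4: "real (N + 1 choose (2 * k + 1)) = 2 * (real k + 1) * (real N + 1) * (2 * real k + 3) * w"
    using nz real_N by (simp only: real_binomial_eq_Suc_right[OF le(3)] x1) (simp add: field_simps)
  have "k + 2 = k + 1 + 1"
    by simp
  then have c': "real (2 * (k + 2) choose (k + 2)) = 2 * (2 * real k + 3) * t"
    using nz by (simp only: real_central_binomial_Suc[of "k + 1"] c) (simp add: field_simps)
  have e: "N - 2 * (k + 1) = d" "N + 1 - 2 * (k + 1) = d + 1" "N + 2 - 2 * (k + 1) = d + 2" "N + 2 - 2 * (k + 2) = d"
    "2 * (k + 2) - 1 = 2 * (k + 1) + 1" "2 * (k + 1) - 1 = 2 * k + 1"
    using N by simp_all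
  show thesis
    by (rule that[of w t]; unfold ct_term_def ct_cert_def e;
        simp only: of_int_mult of_int_power of_int_of_nat_eq of_int_minus of_int_numeral y c x1 x2 x3 x4 c'; simp)
qed

lemma clf_rec_ct_term_interior:
  assumes "2 * (k + 1) \<le> N"
  shows "clf_rec (\<lambda>n. ct_term n (k + 1)) N = ct_cert N (k + 2) - ct_cert N (k + 1)"
proof -
  define d where "d = N - 2 * (k + 1)"
  have N: "N = 2 * (k + 1) + d"
    using assms by (simp add: d_def)
  obtain w t where
    "real_of_int (ct_term N (k + 1)) = (real d + 1) * (real d + 2) * (2 * real k + 3) * w * 4 ^ d * ((real k + 2) * t) ^ 2"
    "real_of_int (ct_term (N + 1) (k + 1)) = (real N + 1) * (real d + 2) * (2 * real k + 3) * w * 4 ^ (d + 1) * ((real k + 2) * t) ^ 2"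
    "real_of_int (ct_term (N + 2) (k + 1)) = (real N + 2) * (real N + 1) * (2 * real k + 3) * w * 4 ^ (d + 2) * ((real k + 2) * t) ^ 2"
    "real_of_int (ct_cert N (k + 2))
       = - 4 * real (k + 2) ^ 2 * ((real N + 1) * (real d + 1) * (real d + 2) * w) * 4 ^ d * (2 * (2 * real k + 3) * t) ^ 2"
    "real_of_int (ct_cert N (k + 1))
       = - 4 * real (k + 1) ^ 2 * (2 * (real k + 1) * (real N + 1) * (2 * real k + 3) * w) * 4 ^ (d + 2) * ((real k + 2) * t) ^ 2"
    using ct_term_normal_form[OF N] by blast
  then have "real_of_int (clf_rec (\<lambda>n. ct_term n (k + 1)) N) = real_of_int (ct_cert N (k + 2) - ct_cert N (k + 1))"
    unfolding clf_rec_of_int[symmetric] clf_rec_def of_int_diff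
    by (simp add: N algebra_simps power2_eq_square power_add)
  then show ?thesis
    by (simp only: of_int_eq_iff)
qed

lemma clf_rec_ct_term_even_boundary:
  "clf_rec (\<lambda>n. ct_term n (k + 1)) (2 * k) = ct_cert (2 * k) (k + 2) - ct_cert (2 * k) (k + 1)"
proof -
  define c where "c = int (2 * (k + 1) choose (k + 1))"
  have "ct_term (2 * k) (k + 1) = 0" "ct_term (2 * k + 1) (k + 1) = 0" "ct_cert (2 * k) (k + 2) = 0"
    by (simp_all add: ct_term_eq_0 ct_cert_def binomial_eq_0)
  moreover have "ct_term (2 * k + 2) (k + 1) = c ^ 2" "ct_cert (2 * k) (k + 1) = - 4 * int (k + 1) ^ 2 * c ^ 2"
    by (simp_all add: ct_term_def ct_cert_def c_def)
  ultimately show ?thesis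
    by (simp add: clf_rec_def algebra_simps power2_eq_square)
qed

lemma clf_rec_ct_term_odd_boundary:
  "clf_rec (\<lambda>n. ct_term n (k + 1)) (2 * k + 1) = ct_cert (2 * k + 1) (k + 2) - ct_cert (2 * k + 1) (k + 1)"
proof -
  define c where "c = int (2 * (k + 1) choose (k + 1))"
  have "2 * k + 3 choose (2 * (k + 1)) = 2 * k + 3" "2 * k + 2 choose (2 * (k + 1) - 1) = 2 * k + 2"
    by (subst binomial_symmetric; simp)+
  then have "ct_term (2 * k + 2) (k + 1) = c ^ 2" "ct_term (2 * k + 3) (k + 1) = 4 * int (2 * k + 3) * c ^ 2"
    "ct_cert (2 * k + 1) (k + 1) = - 16 * int (k + 1) ^ 2 * int (2 * k + 2) * c ^ 2"
    by (simp_all only: ct_term_def ct_cert_def c_def) (simp_all add: algebra_simps)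
  moreover have "ct_term (2 * k + 1) (k + 1) = 0" "ct_cert (2 * k + 1) (k + 2) = 0"
    by (simp_all add: ct_term_eq_0 ct_cert_def binomial_eq_0)
  moreover have "2 * k + 1 + 2 = 2 * k + 3" "2 * k + 1 + 1 = 2 * k + 2"
    by simp_all
  ultimately show ?thesis
    unfolding clf_rec_def by (simp only:) (simp add: algebra_simps power2_eq_square)
qed

lemma clf_rec_ct_term: "clf_rec (\<lambda>n. ct_term n m) N = ct_cert N (m + 1) - ct_cert N m"
proof (cases m)
  case 0
  then show ?thesis
    by (simp add: clf_rec_def ct_term_def ct_cert_def power_add algebra_simps power2_eq_square)
next
  case (Suc k)
  have "N < 2 * k \<or> N = 2 * k \<or> N = 2 * k + 1 \<or> 2 * (k + 1) \<le> N"
    by presburger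
  then show ?thesis
  proof (elim disjE)
    assume "N < 2 * k"
    then show ?thesis
      by (simp add: Suc clf_rec_def ct_term_eq_0 ct_cert_def binomial_eq_0)
  qed (use clf_rec_ct_term_even_boundary[of k] clf_rec_ct_term_odd_boundary[of k]
         clf_rec_ct_term_interior[of k N] Suc in simp_all)
qed

lemma clf_rec_ct_sum: "clf_rec ct_sum N = 0"
  unfolding ct_sum_def
  by (rule clf_rec_telescope[where G = "ct_cert N"]) (auto simp: ct_term_eq_0 clf_rec_ct_term ct_cert_def binomial_eq_0)

lemma clf_sum_eq_ct_sum: "clf_sum n = ct_sum n"
  by (rule clf_rec_unique[OF clf_rec_clf_sum clf_rec_ct_sum])
    (simp_all add: clf_sum_def clf_term_def ct_sum_def ct_term_def)

theorem theorem3: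
  fixes p m r :: nat
  assumes "prime p" and "m > 0" and "r > 0"
  shows "[clf (m * p ^ r) = clf (m * p ^ (r - 1))] (mod (int p ^ r))"
  using ct_sum_congruence[OF assms(1,3), of m] by (simp add: clf_eq clf_sum_eq_ct_sum)

end
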